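(* Let $\pi>0$, $\bar d>0$, $0<\theta_1<\dots<\theta_K$, $0\le\beta_1<\dots<\beta_M\le1$, $A:[0,D]\to[0,\bar d]$ continuously differentiable and decreasing. Let $L(Q,\beta,\theta)=\theta[\bar d-\beta A(Q)]-\pi(1-\beta)A(Q)$, $\bar S(Q,\Pi,\Lambda)=L(Q,\Lambda)-\Pi$ and $\sigma(Q,\beta,\theta)=-[\theta\beta+\pi(1-\beta)]A'(Q)$. Enumerate the $KM$ types $(\beta_m,\theta_k)$ as $\Lambda_1,\dots,\Lambda_{KM}$ with $\sigma(Q,\Lambda_1)\le\dots\le\sigma(Q,\Lambda_{KM})$, and let $\epsilon$ be an index such that $\bar S(Q,\Pi,\Lambda_\epsilon)\le\bar S(Q,\Pi,\Lambda_i)$ for all $i$ and all $(Q,\Pi)$. Define $\eta^-(\Lambda_i,Q_i,Q_{i-1})=L(Q_i,\Lambda_i)-L(Q_{i-1},\Lambda_i)$ and $\eta^+(\Lambda_i,Q_i,Q_{i+1})=L(Q_i,\Lambda_i)-L(Q_{i+1},\Lambda_i)$. A contract $\{(Q_i,\Pi_i)\}_{i=1}^{KM}$ with $Q_i\in[0,D]$ is feasible (i.e. $\bar S(Q_i,\Pi_i,\Lambda_i)\ge0$ for all $i$ and $\bar S(Q_i,\Pi_i,\Lambda_i)\ge\bar S(Q_j,\Pi_j,\Lambda_i)$ for all $i\ne j$) if all of the following hold: 1) $Q_1\le Q_2\le\dots\le Q_{KM}$; 2) $\Pi_\epsilon\le L(Q_\epsilon,\Lambda_\epsilon)$; 3)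 for all $i=1,\dots,\epsilon-1$: $\Pi_i\le\Pi_{i+1}+\eta^+(\Lambda_i,Q_i,Q_{i+1})$ and $\Pi_i\ge\Pi_{i+1}-\eta^-(\Lambda_{i+1},Q_{i+1},Q_i)$; 4) for all $i=\epsilon+1,\dots,KM$: $\Pi_i\le\Pi_{i-1}+\eta^-(\Lambda_i,Q_i,Q_{i-1})$ and $\Pi_i\ge\Pi_{i-1}-\eta^+(\Lambda_{i-1},Q_{i-1},Q_i)$.
   Context: Model: an operator offers one contract item (data cap $Q_i$, subscription fee $\Pi_i$) for each user type $\Lambda_i=(\beta,\theta)$ (network substitutability $\beta$, data valuation $\theta$). $\pi$ is the overage price, $\bar d$ the mean demand, $A(Q)$ the expected overage consumption under cap $Q$ (decreasing, convex). $L$ is the virtual payoff, $\bar S$ the expected payoff, $\sigma$ the willingness-to-pay (the ordering by $\sigma$ does not depend on $Q$), $\Lambda_\epsilon$ the smallest-payoff type (which exists and does not depend on $(Q,\Pi)$). *)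

theory Defs
  imports "HOL-Analysis.Analysis"
begin

text \<open>A user type is a pair (beta, theta): network substitutability and data valuation.\<close>

definition Lpay :: "real \<Rightarrow> real \<Rightarrow> (real \<Rightarrow> real) \<Rightarrow> real \<Rightarrow> real \<times> real \<Rightarrow> real" where
  "Lpay ppi dbar A Q Lam = snd Lam * (dbar - fst Lam * A Q) - ppi * (1 - fst Lam) * A Q"

definition Sbar :: "real \<Rightarrow> real \<Rightarrow> (real \<Rightarrow> real) \<Rightarrow> real \<Rightarrow> real \<Rightarrow> real \<times> real \<Rightarrow> real" where
  "Sbar ppi dbar A Q P Lam = Lpay ppi dbar A Q Lam - P"

definition sigma :: "real \<Rightarrow> (real \<Rightarrow> real) \<Rightarrow> real \<Rightarrow> real \<times> real \<Rightarrow> real" where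
  "sigma ppi A' Q Lam = - (snd Lam * fst Lam + ppi * (1 - fst Lam)) * A' Q"

definition eta_minus :: "real \<Rightarrow> real \<Rightarrow> (real \<Rightarrow> real) \<Rightarrow> real \<times> real \<Rightarrow> real \<Rightarrow> real \<Rightarrow> real" where
  "eta_minus ppi dbar A Lam Qi Qprev = Lpay ppi dbar A Qi Lam - Lpay ppi dbar A Qprev Lam"

definition eta_plus :: "real \<Rightarrow> real \<Rightarrow> (real \<Rightarrow> real) \<Rightarrow> real \<times> real \<Rightarrow> real \<Rightarrow> real \<Rightarrow> real" where
  "eta_plus ppi dbar A Lam Qi Qnext = Lpay ppi dbar A Qi Lam - Lpay ppi dbar A Qnext Lam"

definition feasible :: "real \<Rightarrow> real \<Rightarrow> (real \<Rightarrow> real) \<Rightarrow> nat \<Rightarrow> (nat \<Rightarrow> real \<times> real)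
    \<Rightarrow> (nat \<Rightarrow> real) \<Rightarrow> (nat \<Rightarrow> real) \<Rightarrow> bool" where
  "feasible ppi dbar A N Lam Q P \<longleftrightarrow>
     (\<forall>i\<in>{1..N}. Sbar ppi dbar A (Q i) (P i) (Lam i) \<ge> 0) \<and>
     (\<forall>i\<in>{1..N}. \<forall>j\<in>{1..N}. i \<noteq> j \<longrightarrow>
        Sbar ppi dbar A (Q i) (P i) (Lam i) \<ge> Sbar ppi dbar A (Q j) (P j) (Lam i))"

end

theory Submission
  imports Defs
begin

text \<open>The payoff L(Q, Lam) is affine in the overage A(Q), with slope minus the weight
w(Lam) = theta beta + pi (1 - beta), and sigma(Q, Lam) = - w(Lam) A'(Q). Unless A takes the same
value at all offered caps, the mean value theorem yields a point where A' < 0, and there the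
sorting by sigma sorts the weights (single crossing). Constraints 3) and 4) bound each price step
P(k+1) - P(k) between w(Lam k) and w(Lam (k+1)) times the overage drop A(Q k) - A(Q (k+1)) >= 0;
telescoping with sorted weights extends these bounds to all pairs i <= j, and the two bounds are
exactly the incentive constraints of type i against item j and of type j against item i.
Individual rationality then follows from 2): type i values its own item at least as much as item
eps, and item eps at least as much as type eps does.\<close>

definition overage_weight :: "real \<Rightarrow> real \<times> real \<Rightarrow> real" where
  "overage_weight ppi Lam = snd Lam * fst Lam + ppi * (1 - fst Lam)"

lemma Lpay_eq_overage_weight:
  "Lpay ppi dbar A Q Lam = snd Lam * dbar - overage_weight ppi Lam * A Q"
  by (simp add: Lpay_def overage_weight_def algebra_simps)

lemma eta_plus_eq_overage_weight:
  "eta_plus ppi dbar A L q q' = overage_weight ppi L * (A q' - A q)"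
  by (simp add: eta_plus_def Lpay_eq_overage_weight algebra_simps)

lemma eta_minus_eq_overage_weight:
  "eta_minus ppi dbar A L q q' = overage_weight ppi L * (A q' - A q)"
  by (simp add: eta_minus_def Lpay_eq_overage_weight algebra_simps)

lemma Sbar_le_iff_price_gap:
  "Sbar ppi dbar A q' p' L \<le> Sbar ppi dbar A q p L \<longleftrightarrow> overage_weight ppi L * (A q - A q') \<le> p' - p"
  by (simp add: Sbar_def Lpay_eq_overage_weight algebra_simps)

lemma overage_weight_le_if_sigma_le:
  assumes "A' x < 0" and "sigma ppi A' x L \<le> sigma ppi A' x L'"
  shows "overage_weight ppi L \<le> overage_weight ppi L'"
  using assms by (simp add: sigma_def flip: overage_weight_def)

lemma neg_deriv_if_strict_decrease:
  fixes f f' :: "real \<Rightarrow> real"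
  assumes "u \<le> v" and "f v < f u"
    and deriv: "\<And>x. x \<in> {u..v} \<Longrightarrow> (f has_real_derivative f' x) (at x within {u..v})"
  shows "\<exists>x\<in>{u<..<v}. f' x < 0"
proof -
  have "u < v"
    using assms(1,2) by (cases "u = v") auto
  moreover have "(f has_derivative (\<lambda>h. f' x * h)) (at x within {u..v})" if "u \<le> x" "x \<le> v" for x
    using deriv[of x] that by (simp add: has_field_derivative_def)
  ultimately obtain x where "x \<in> {u<..<v}" and "f v - f u = f' x * (v - u)"
    using mvt_simple[of u v f "\<lambda>x h. f' x * h"] by blast
  moreover from this \<open>f v < f u\<close> have "f' x * (v - u) < 0"
    by linarith
  with \<open>u < v\<close> have "f' x < 0"
    by (simp add: mult_less_0_iff)
  ultimately show ?thesis by blast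
qed

lemma telescoped_price_bounds:
  fixes a c P :: "nat \<Rightarrow> real"
  assumes antitone: "\<And>k l. m \<le> k \<Longrightarrow> k \<le> l \<Longrightarrow> l \<le> n \<Longrightarrow> a l \<le> a k"
    and crossing: "mono_on {m..n} c \<or> (\<forall>k\<in>{m..n}. a k = a m)"
    and step: "\<And>k. m \<le> k \<Longrightarrow> k < n \<Longrightarrow>
      c k * (a k - a (Suc k)) \<le> P (Suc k) - P k \<and> P (Suc k) - P k \<le> c (Suc k) * (a k - a (Suc k))"
    and "m \<le> i" "i \<le> j" "j \<le> n"
  shows "c i * (a i - a j) \<le> P j - P i \<and> P j - P i \<le> c j * (a i - a j)"
proof -
  have term_bounds: "c i * (a k - a (Suc k)) \<le> P (Suc k) - P k \<and>
      P (Suc k) - P k \<le> c j * (a k - a (Suc k))" if "k \<in> {i..<j}" for k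
  proof -
    have k: "m \<le> k" "k < n"
      using that assms(4-6) by auto
    have "c i * (a k - a (Suc k)) \<le> c k * (a k - a (Suc k)) \<and>
        c (Suc k) * (a k - a (Suc k)) \<le> c j * (a k - a (Suc k))"
      using crossing
    proof
      assume "mono_on {m..n} c"
      then have "c i \<le> c k" "c (Suc k) \<le> c j"
        using that assms(4-6) by (auto intro: mono_onD)
      moreover have "0 \<le> a k - a (Suc k)"
        using antitone[of k "Suc k"] k by simp
      ultimately show ?thesis
        by (simp add: mult_right_mono)
    next
      assume const: "\<forall>k\<in>{m..n}. a k = a m"
      have "a (Suc k) = a k"
        using const[rule_format, of k] const[rule_format, of "Suc k"] k by simp
      then show ?thesis by simp
    qed
    with step[OF k] show ?thesis
      by linarith
  qed
  have drops: "(\<Sum>k=i..<j. a k - a (Suc k)) = a i - a j"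
    using sum_Suc_diff'[OF \<open>i \<le> j\<close>, of "\<lambda>k. - a k"] by simp
  have "c i * (a i - a j) = (\<Sum>k=i..<j. c i * (a k - a (Suc k)))"
    by (simp add: drops flip: sum_distrib_left)
  also have "\<dots> \<le> (\<Sum>k=i..<j. P (Suc k) - P k)"
    using term_bounds by (intro sum_mono) blast
  also have "\<dots> = P j - P i"
    using sum_Suc_diff'[OF \<open>i \<le> j\<close>] .
  finally have lower: "c i * (a i - a j) \<le> P j - P i" .
  have "P j - P i = (\<Sum>k=i..<j. P (Suc k) - P k)"
    by (rule sum_Suc_diff'[OF \<open>i \<le> j\<close>, symmetric])
  also have "\<dots> \<le> (\<Sum>k=i..<j. c j * (a k - a (Suc k)))"
    using term_bounds by (intro sum_mono) blast
  also have "\<dots> = c j * (a i - a j)"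
    by (simp add: drops flip: sum_distrib_left)
  finally show ?thesis
    using lower by simp
qed

lemma overage_weight_mono_or_overage_const:
  fixes A A' :: "real \<Rightarrow> real" and Q :: "nat \<Rightarrow> real" and Lam :: "nat \<Rightarrow> real \<times> real"
  assumes A_deriv: "\<forall>x\<in>{0..D}. (A has_real_derivative A' x) (at x within {0..D})"
    and A_decr: "\<forall>x\<in>{0..D}. \<forall>y\<in>{0..D}. x \<le> y \<longrightarrow> A y \<le> A x"
    and sigma_sorted: "\<forall>x\<in>{0..D}. \<forall>i\<in>{m..n}. \<forall>j\<in>{m..n}. i \<le> j \<longrightarrow>
                         sigma ppi A' x (Lam i) \<le> sigma ppi A' x (Lam j)"
    and Q_range: "\<forall>i\<in>{m..n}. Q i \<in> {0..D}"
    and Q_mono: "\<forall>i\<in>{m..n}. \<forall>j\<in>{m..n}. i \<le> j \<longrightarrow> Q i \<le> Q j"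
  shows "mono_on {m..n} (\<lambda>i. overage_weight ppi (Lam i)) \<or> (\<forall>k\<in>{m..n}. A (Q k) = A (Q m))"
proof (rule disjCI)
  assume "\<not> (\<forall>k\<in>{m..n}. A (Q k) = A (Q m))"
  then obtain k where k: "k \<in> {m..n}" "A (Q k) \<noteq> A (Q m)"
    by blast
  then have caps: "Q m \<le> Q k" "Q m \<in> {0..D}" "Q k \<in> {0..D}"
    using Q_mono Q_range by auto
  with A_decr k(2) have "A (Q k) < A (Q m)"
    by (meson order_le_imp_less_or_eq)
  moreover have "(A has_real_derivative A' x) (at x within {Q m..Q k})" if "x \<in> {Q m..Q k}" for x
  proof -
    have "{Q m..Q k} \<subseteq> {0..D}"
      using caps by auto
    then show ?thesis
      using A_deriv that by (meson has_field_derivative_subset subsetD)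
  qed
  ultimately obtain x where "x \<in> {Q m<..<Q k}" and neg: "A' x < 0"
    using neg_deriv_if_strict_decrease[OF caps(1)] by blast
  with caps have "x \<in> {0..D}"
    by auto
  with sigma_sorted show "mono_on {m..n} (\<lambda>i. overage_weight ppi (Lam i))"
    by (intro mono_onI overage_weight_le_if_sigma_le[where A' = A', OF neg]) auto
qed

theorem theorem2:
  fixes ppi dbar D :: real and K M N eps :: nat
    and beta theta :: "nat \<Rightarrow> real" and A A' :: "real \<Rightarrow> real"
    and lam :: "nat \<Rightarrow> nat \<times> nat" and Lam :: "nat \<Rightarrow> real \<times> real"
    and Q P :: "nat \<Rightarrow> real"
  assumes pi_pos: "ppi > 0" and dbar_pos: "dbar > 0"
    and theta_pos: "\<forall>k\<in>{1..K}. 0 < theta k" and theta_mono: "strict_mono_on {1..K} theta"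
    and beta_range: "\<forall>m\<in>{1..M}. 0 \<le> beta m \<and> beta m \<le> 1" and beta_mono: "strict_mono_on {1..M} beta"
    and A_range: "\<forall>x\<in>{0..D}. 0 \<le> A x \<and> A x \<le> dbar"
    and A_deriv: "\<forall>x\<in>{0..D}. (A has_real_derivative A' x) (at x within {0..D})"
    and A'_cont: "continuous_on {0..D} A'"
    and A_decr: "\<forall>x\<in>{0..D}. \<forall>y\<in>{0..D}. x \<le> y \<longrightarrow> A y \<le> A x"
    and N_def: "N = K * M"
    and lam_bij: "bij_betw lam {1..N} ({1..M} \<times> {1..K})"
    and Lam_def: "\<forall>i\<in>{1..N}. Lam i = (beta (fst (lam i)), theta (snd (lam i)))"
    and sigma_sorted: "\<forall>x\<in>{0..D}. \<forall>i\<in>{1..N}. \<forall>j\<in>{1..N}. i \<le> j \<longrightarrow>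
                         sigma ppi A' x (Lam i) \<le> sigma ppi A' x (Lam j)"
    and eps_range: "eps \<in> {1..N}"
    and eps_min: "\<forall>x\<in>{0..D}. \<forall>p::real. \<forall>i\<in>{1..N}.
                    Sbar ppi dbar A x p (Lam eps) \<le> Sbar ppi dbar A x p (Lam i)"
    and Q_range: "\<forall>i\<in>{1..N}. Q i \<in> {0..D}"
    and c1: "\<forall>i\<in>{1..N}. \<forall>j\<in>{1..N}. i \<le> j \<longrightarrow> Q i \<le> Q j"
    and c2: "P eps \<le> Lpay ppi dbar A (Q eps) (Lam eps)"
    and c3: "\<forall>i. 1 \<le> i \<and> i < eps \<longrightarrow>
               P i \<le> P (i + 1) + eta_plus ppi dbar A (Lam i) (Q i) (Q (i + 1)) \<and>
               P i \<ge> P (i + 1) - eta_minus ppi dbar A (Lam (i + 1)) (Q (i + 1)) (Q i)"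
    and c4: "\<forall>i. eps + 1 \<le> i \<and> i \<le> N \<longrightarrow>
               P i \<le> P (i - 1) + eta_minus ppi dbar A (Lam i) (Q i) (Q (i - 1)) \<and>
               P i \<ge> P (i - 1) - eta_plus ppi dbar A (Lam (i - 1)) (Q (i - 1)) (Q i)"
  shows "feasible ppi dbar A N Lam Q P"
proof -
  define w where "w = (\<lambda>i. overage_weight ppi (Lam i))"
  define a where "a = (\<lambda>i. A (Q i))"
  have step: "w k * (a k - a (Suc k)) \<le> P (Suc k) - P k \<and> P (Suc k) - P k \<le> w (Suc k) * (a k - a (Suc k))"
    if "1 \<le> k" "k < N" for k
    using c3[rule_format, of k] c4[rule_format, of "Suc k"] that
    by (cases "k < eps")
      (simp_all add: w_def a_def eta_plus_eq_overage_weight eta_minus_eq_overage_weight algebra_simps)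
  have antitone: "a l \<le> a k" if "1 \<le> k" "k \<le> l" "l \<le> N" for k l
    using A_decr c1 Q_range that unfolding a_def by auto
  have crossing: "mono_on {1..N} w \<or> (\<forall>k\<in>{1..N}. a k = a 1)"
    using overage_weight_mono_or_overage_const[OF A_deriv A_decr sigma_sorted Q_range c1]
    by (simp add: w_def a_def)
  have IC: "Sbar ppi dbar A (Q j) (P j) (Lam i) \<le> Sbar ppi dbar A (Q i) (P i) (Lam i)"
    if "i \<in> {1..N}" "j \<in> {1..N}" for i j
    unfolding Sbar_le_iff_price_gap
    using telescoped_price_bounds[OF antitone crossing step, of i j]
      telescoped_price_bounds[OF antitone crossing step, of j i] that
    by (cases "i \<le> j") (auto simp: w_def a_def right_diff_distrib)
  have IR: "0 \<le> Sbar ppi dbar A (Q i) (P i) (Lam i)" if "i \<in> {1..N}" for i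
  proof -
    have "0 \<le> Sbar ppi dbar A (Q eps) (P eps) (Lam eps)"
      using c2 by (simp add: Sbar_def)
    also have "\<dots> \<le> Sbar ppi dbar A (Q eps) (P eps) (Lam i)"
      using eps_min Q_range eps_range that by blast
    also have "\<dots> \<le> Sbar ppi dbar A (Q i) (P i) (Lam i)"
      using IC that eps_range by blast
    finally show ?thesis .
  qed
  show ?thesis
    unfolding feasible_def using IC IR by blast
qed

end
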